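(* Let $\alpha,t,n$ be positive integers and let $\mathcal{C}_W$ be a binary $t$-write WOM code on $n$ cells with encoders $\mathcal{E}^W_1,\ldots,\mathcal{E}^W_t$ and sum-rate $R_{\mathrm{sum}}$. Define the code $\mathcal{C}_{\alpha,1,1}$ on $n$ cells, starting from $\mathbf{c}_0=\mathbf{0}$, as follows: for the $i$-th write ($i\ge1$) let $i'=i\bmod 2(t+\alpha)\in\{1,\ldots,2(t+\alpha)\}$ and let $\mathbf{c}_i$ be the state after the $i$-th write. If $i'\in[1:t]$, a message $M\in[1:2^{nR_{i'}}]$ is written by $\mathbf{c}_i=\mathcal{E}^W_{i'}(M,\mathbf{c}_{i-1})$; if $i'=t+1$, no information is written and $\mathbf{c}_i=\mathbf{1}$ (all-one vector); if $i'\in[t+2:t+\alpha]$, no information is written and $\mathbf{c}_i=\mathbf{c}_{i-1}$; if $i'\in[t+\alpha+1:2t+\alpha]$, a message $M\in[1:2^{nR_{i'-t-\alpha}}]$ is written by $\mathbf{c}_i=\overline{\mathcal{E}^W_{i'-t-\alpha}(M,\overline{\mathbf{c}_{i-1}})}$; if $i'=2t+\alpha+1$, no information is written and $\mathbf{c}_i=\mathbf{0}$; if $i'\in[2t+\alpha+2:2(t+\alpha)]$, no information is written and $\mathbf{c}_i=\mathbf{c}_{i-1}$. Then $\mathcal{C}_{\alpha,1,1}$ is an $(\alpha,1,1)$-constrained code, and if $R_{\mathrm{sum}}=\log_2(t+1)$ (i.e. $\mathcal{C}_W$ is sum-rate optimal), then the rate of $\mathcal{C}_{\alpha,1,1}$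 is $\frac{\log_2(t+1)}{t+\alpha}$.
   Context: Convention: $x\bmod y$ is taken in $\{1,\ldots,y\}$; $[a:b]=\{a,\ldots,b\}$; $[1:2^{nR}]=\{1,\ldots,\lfloor2^{nR}\rfloor\}$; $\overline{\mathbf{u}}$ is the bitwise complement. A binary $t$-write WOM (write-once memory) code $[n,t;2^{nR_1},\ldots,2^{nR_t}]$ consists of encoders $\mathcal{E}^W_j:[1:2^{nR_j}]\times\{0,1\}^n\to\{0,1\}^n$ and decoders $\mathcal{D}^W_j:\{0,1\}^n\to[1:2^{nR_j}]$, $j=1,\ldots,t$, such that $\mathbf{c}\le\mathcal{E}^W_j(m,\mathbf{c})$ componentwise (cells only change from 0 to 1) and $\mathcal{D}^W_j(\mathcal{E}^W_j(m,\mathbf{c}))=m$; its sum-rate is $R_{\mathrm{sum}}=\sum_{j=1}^tR_j$. A code on $n$ binary cells consists, for each write $i\ge1$, of a real $R_i\ge0$, an encoder $\mathcal{E}_i:[1:2^{nR_i}]\times\{0,1\}^n\to\{0,1\}^n$ and decoder $\mathcal{D}_i$ with $\mathcal{D}_i(\mathcal{E}_i(m,\mathbf{u}))=m$ (both may depend on $i$; writes with no information have one message, $R_i=0$). Starting from the zero state, messages produce states $\mathbf{v}_i$. The code is $(\alpha,\beta,p)$-constrained if for every message sequence, every $i\ge0$ and every $1\le j\le n-\beta+1$, $|\{(k,\ell): v_{i+k,j+\ell}\ne v_{i+k+1,j+\ell}, 0\le k<\alpha, 0\le\ell<\beta\}|\le p$. Rate: $\lim_{m\to\infty}\frac1m\sum_{i=1}^mR_i$.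 *)

theory Defs
  imports Complex_Main
begin

text \<open>Cell states on n binary cells are boolean lists of length n (False = 0, True = 1).
  Bit positions are 0-indexed in the list.\<close>

definition msgs :: "nat \<Rightarrow> real \<Rightarrow> nat set" where
  "msgs n R = {1 .. nat \<lfloor>2 powr (real n * R)\<rfloor>}"

fun wom_before :: "nat \<Rightarrow> (nat \<Rightarrow> real) \<Rightarrow> (nat \<Rightarrow> nat \<Rightarrow> bool list \<Rightarrow> bool list)
                     \<Rightarrow> nat \<Rightarrow> bool list set" where
  "wom_before n R E 0 = {replicate n False}"
| "wom_before n R E (Suc j) =
     {E (Suc j) m c | m c. m \<in> msgs n (R (Suc j)) \<and> c \<in> wom_before n R E j}"

definition wom_code :: "nat \<Rightarrow> nat \<Rightarrow> (nat \<Rightarrow> real) \<Rightarrow> (nat \<Rightarrow> nat \<Rightarrow> bool list \<Rightarrow> bool list)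
                         \<Rightarrow> (nat \<Rightarrow> bool list \<Rightarrow> nat) \<Rightarrow> bool" where
  "wom_code n t R E D \<longleftrightarrow>
     (\<forall>j\<in>{1..t}. R j \<ge> 0 \<and>
        (\<forall>m\<in>msgs n (R j). \<forall>c\<in>wom_before n R E (j - 1).
            list_all2 (\<le>) c (E j m c) \<and> D j (E j m c) = m))"

definition sum_rate :: "nat \<Rightarrow> (nat \<Rightarrow> real) \<Rightarrow> real" where
  "sum_rate t R = (\<Sum>j=1..t. R j)"

primrec code_state :: "nat \<Rightarrow> (nat \<Rightarrow> nat \<Rightarrow> bool list \<Rightarrow> bool list) \<Rightarrow> (nat \<Rightarrow> nat)
                        \<Rightarrow> nat \<Rightarrow> bool list" where
  "code_state n E ms 0 = replicate n False"
| "code_state n E ms (Suc i) = E (Suc i) (ms (Suc i)) (code_state n E ms i)"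

definition valid_msgs :: "nat \<Rightarrow> (nat \<Rightarrow> real) \<Rightarrow> (nat \<Rightarrow> nat) \<Rightarrow> bool" where
  "valid_msgs n R ms \<longleftrightarrow> (\<forall>i\<ge>1. ms i \<in> msgs n (R i))"

definition is_code :: "nat \<Rightarrow> (nat \<Rightarrow> real) \<Rightarrow> (nat \<Rightarrow> nat \<Rightarrow> bool list \<Rightarrow> bool list)
                        \<Rightarrow> (nat \<Rightarrow> bool list \<Rightarrow> nat) \<Rightarrow> bool" where
  "is_code n R E D \<longleftrightarrow> (\<forall>i\<ge>1. R i \<ge> 0) \<and>
     (\<forall>ms. valid_msgs n R ms \<longrightarrow>
        (\<forall>i\<ge>1. length (code_state n E ms i) = n \<and> D i (code_state n E ms i) = ms i))"

text \<open>(alpha,beta,p)-constrained code; cell j (1-indexed) is list position j - 1.\<close>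
definition constrained_code :: "nat \<Rightarrow> (nat \<Rightarrow> real) \<Rightarrow> (nat \<Rightarrow> nat \<Rightarrow> bool list \<Rightarrow> bool list)
       \<Rightarrow> (nat \<Rightarrow> bool list \<Rightarrow> nat) \<Rightarrow> nat \<Rightarrow> nat \<Rightarrow> nat \<Rightarrow> bool" where
  "constrained_code n R E D \<alpha> \<beta> p \<longleftrightarrow> is_code n R E D \<and>
     (\<forall>ms. valid_msgs n R ms \<longrightarrow>
        (\<forall>i j. 1 \<le> j \<and> j + \<beta> \<le> n + 1 \<longrightarrow>
           card {(k, l). k < \<alpha> \<and> l < \<beta> \<and>
                  code_state n E ms (i + k) ! (j + l - 1) \<noteq> code_state n E ms (i + k + 1) ! (j + l - 1)}
           \<le> p))"

definition code_rate :: "(nat \<Rightarrow> real) \<Rightarrow> real \<Rightarrow> bool" where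
  "code_rate R L \<longleftrightarrow> (\<lambda>m. (\<Sum>i=1..m. R i) / real m) \<longlonglongrightarrow> L"

definition cidx :: "nat \<Rightarrow> nat \<Rightarrow> nat \<Rightarrow> nat" where
  "cidx t \<alpha> i = (if i mod (2 * (t + \<alpha>)) = 0 then 2 * (t + \<alpha>) else i mod (2 * (t + \<alpha>)))"

definition constr_R :: "nat \<Rightarrow> nat \<Rightarrow> (nat \<Rightarrow> real) \<Rightarrow> nat \<Rightarrow> real" where
  "constr_R t \<alpha> R i = (let i' = cidx t \<alpha> i in
     if 1 \<le> i' \<and> i' \<le> t then R i'
     else if t + \<alpha> + 1 \<le> i' \<and> i' \<le> 2 * t + \<alpha> then R (i' - t - \<alpha>)
     else 0)"

definition constr_E :: "nat \<Rightarrow> nat \<Rightarrow> nat \<Rightarrow> (nat \<Rightarrow> nat \<Rightarrow> bool list \<Rightarrow> bool list)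
                          \<Rightarrow> nat \<Rightarrow> nat \<Rightarrow> bool list \<Rightarrow> bool list" where
  "constr_E n t \<alpha> E i m u = (let i' = cidx t \<alpha> i in
     if 1 \<le> i' \<and> i' \<le> t then E i' m u
     else if i' = t + 1 then replicate n True
     else if t + 2 \<le> i' \<and> i' \<le> t + \<alpha> then u
     else if t + \<alpha> + 1 \<le> i' \<and> i' \<le> 2 * t + \<alpha> then map Not (E (i' - t - \<alpha>) m (map Not u))
     else if i' = 2 * t + \<alpha> + 1 then replicate n False
     else u)"

definition constr_D :: "nat \<Rightarrow> nat \<Rightarrow> (nat \<Rightarrow> bool list \<Rightarrow> nat) \<Rightarrow> nat \<Rightarrow> bool list \<Rightarrow> nat" where
  "constr_D t \<alpha> D i v = (let i' = cidx t \<alpha> i in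
     if 1 \<le> i' \<and> i' \<le> t then D i' v
     else if t + \<alpha> + 1 \<le> i' \<and> i' \<le> 2 * t + \<alpha> then D (i' - t - \<alpha>) (map Not v)
     else 1)"

end

theory Submission
  imports Defs
begin

text \<open>Within a cycle of \<open>2(t + \<alpha>)\<close> writes the cells can only rise during the first
  \<open>t + \<alpha>\<close> writes (WOM writes, all cells set to 1, idle writes) and only fall during the
  last \<open>t + \<alpha>\<close> (complemented WOM writes, reset to 0, idle writes). A cell can only change at
  cyclic index at most \<open>t + 1\<close>, resp. between \<open>t + \<alpha> + 1\<close> and \<open>2t + \<alpha> + 1\<close>, so the
  following \<open>\<alpha> - 1\<close> writes stay in the same half and cannot undo the change: no cell changes
  twice within \<open>\<alpha>\<close> consecutive writes. The rates are periodic and sum to \<open>2 R_sum\<close> over a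
  period, so their running average tends to \<open>R_sum / (t + \<alpha>)\<close>.\<close>

lemma periodic_average_tendsto:
  fixes f :: "nat \<Rightarrow> real"
  assumes P: "0 < P" and periodic: "\<And>i. f (i + P) = f i"
  shows "(\<lambda>m. (\<Sum>i=1..m. f i) / real m) \<longlonglongrightarrow> (\<Sum>i=1..P. f i) / real P"
proof -
  define L where "L = (\<Sum>i=1..P. f i) / real P"
  define e where "e m = (\<Sum>i=1..m. f i) - real m * L" for m
  have sum_add_period: "(\<Sum>i=1..m + P. f i) = (\<Sum>i=1..m. f i) + (\<Sum>i=1..P. f i)" for m
  proof (induction m)
    case (Suc m)
    then show ?case using periodic[of "Suc m"] by simp
  qed simp
  have "real P * L = (\<Sum>i=1..P. f i)" using P by (simp add: L_def)
  then have e_shift: "e (m + P) = e m" for m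
    using sum_add_period[of m] by (simp add: e_def algebra_simps)
  have e_periodic: "e (r + q * P) = e r" for q r
  proof (induction q)
    case (Suc q)
    then show ?case using e_shift[of "r + q * P"] by (simp add: ac_simps)
  qed simp
  define B where "B = (\<Sum>r<P. \<bar>e r\<bar>)"
  have e_bounded: "\<bar>e m\<bar> \<le> B" for m
  proof -
    have "e m = e (m mod P)" using e_periodic[of "m mod P" "m div P"] by simp
    also have "\<bar>\<dots>\<bar> \<le> B" unfolding B_def by (rule member_le_sum) (use P in auto)
    finally show ?thesis .
  qed
  have "(\<lambda>m. e m / real m) \<longlonglongrightarrow> 0"
  proof (rule tendsto_0_le[OF lim_1_over_n, where K = B])
    show "\<forall>\<^sub>F m in sequentially. norm (e m / real m) \<le> norm (1 / real m :: real) * B"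
      using e_bounded by (intro always_eventually) (simp add: divide_simps)
  qed
  then have "(\<lambda>m. L + e m / real m) \<longlonglongrightarrow> L"
    using tendsto_add[of "\<lambda>_. L" L] by fastforce
  moreover have "\<forall>\<^sub>F m in sequentially. L + e m / real m = (\<Sum>i=1..m. f i) / real m"
    by (rule eventually_sequentiallyI[of 1]) (simp add: e_def field_simps)
  ultimately show ?thesis
    unfolding L_def by (rule Lim_transform_eventually)
qed

lemma cidx_Suc_eq: "cidx t \<alpha> (Suc i) = Suc (i mod (2 * (t + \<alpha>)))"
  unfolding cidx_def by (auto simp: mod_Suc)

lemma mod_add_no_wrap: "(i::nat) mod P + e < P \<Longrightarrow> (i + e) mod P = i mod P + e"
  using mod_add_left_eq[of i P e] by simp

lemma msgs_0: "msgs n 0 = {1}"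
  unfolding msgs_def by simp

locale cyclic_construction =
  fixes \<alpha> t n :: nat and R :: "nat \<Rightarrow> real"
    and E :: "nat \<Rightarrow> nat \<Rightarrow> bool list \<Rightarrow> bool list"
    and D :: "nat \<Rightarrow> bool list \<Rightarrow> nat"
  assumes alpha_pos: "0 < \<alpha>"
    and wom: "wom_code n t R E D"
begin

abbreviation "WB \<equiv> wom_before n R E"
abbreviation "CR \<equiv> constr_R t \<alpha> R"
abbreviation "CE \<equiv> constr_E n t \<alpha> E"
abbreviation "CD \<equiv> constr_D t \<alpha> D"
text \<open>Write \<open>i + 1\<close> has cyclic index \<open>Suc (phase i)\<close>, so \<open>phase i\<close> is the number of
  writes already performed in the current cycle.\<close>
abbreviation "period \<equiv> 2 * (t + \<alpha>)"
abbreviation "phase i \<equiv> i mod period"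
abbreviation "state ms i \<equiv> code_state n CE ms i"

lemma phase_Suc: "phase i = c \<Longrightarrow> phase (Suc i) = (if Suc c = period then 0 else Suc c)"
  using mod_Suc[of i period] by simp

lemma constr_R_Suc:
  "phase i = c \<Longrightarrow> CR (Suc i) = (if c < t then R (Suc c)
     else if t + \<alpha> \<le> c \<and> c < 2 * t + \<alpha> then R (Suc c - t - \<alpha>)
     else 0)"
  by (simp add: constr_R_def cidx_Suc_eq Let_def)

lemma constr_E_Suc:
  "phase i = c \<Longrightarrow> CE (Suc i) m u = (if c < t then E (Suc c) m u
     else if c = t then replicate n True
     else if c < t + \<alpha> then u
     else if c < 2 * t + \<alpha> then map Not (E (Suc c - t - \<alpha>) m (map Not u))
     else if c = 2 * t + \<alpha> then replicate n False
     else u)"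
  by (simp add: constr_E_def cidx_Suc_eq Let_def)

lemma constr_D_Suc:
  "phase i = c \<Longrightarrow> CD (Suc i) v = (if c < t then D (Suc c) v
     else if t + \<alpha> \<le> c \<and> c < 2 * t + \<alpha> then D (Suc c - t - \<alpha>) (map Not v)
     else 1)"
  by (simp add: constr_D_def cidx_Suc_eq Let_def)

lemma wom_code_write:
  "1 \<le> j \<Longrightarrow> j \<le> t \<Longrightarrow> m \<in> msgs n (R j) \<Longrightarrow> c \<in> WB (j - 1) \<Longrightarrow>
   list_all2 (\<le>) c (E j m c) \<and> D j (E j m c) = m"
  using wom unfolding wom_code_def by auto

lemma wom_before_length: "j \<le> t \<Longrightarrow> v \<in> WB j \<Longrightarrow> length v = n"
proof (induction j arbitrary: v)
  case (Suc j)
  then obtain m c where "v = E (Suc j) m c" "m \<in> msgs n (R (Suc j))" "c \<in> WB j"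
    by auto
  with Suc show ?case
    using wom_code_write[of "Suc j" m c] list_all2_lengthD by fastforce
qed simp

definition phase_state :: "nat \<Rightarrow> bool list \<Rightarrow> bool" where
  "phase_state c v \<longleftrightarrow>
     (c \<le> t \<longrightarrow> v \<in> WB c)
   \<and> (t < c \<and> c \<le> t + \<alpha> \<longrightarrow> v = replicate n True)
   \<and> (t + \<alpha> < c \<and> c \<le> 2 * t + \<alpha> \<longrightarrow> map Not v \<in> WB (c - t - \<alpha>))
   \<and> (2 * t + \<alpha> < c \<longrightarrow> v = replicate n False)"

lemma phase_state_length:
  assumes "phase_state c v" shows "length v = n"
proof -
  consider "c \<le> t" | "t < c \<and> c \<le> t + \<alpha>" | "t + \<alpha> < c \<and> c \<le> 2 * t + \<alpha>" | "2 * t + \<alpha> < c"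
    by linarith
  then show ?thesis
  proof cases
    case 3
    then have "map Not v \<in> WB (c - t - \<alpha>)" using assms unfolding phase_state_def by simp
    then show ?thesis using 3 wom_before_length[of "c - t - \<alpha>"] by fastforce
  qed (use assms wom_before_length in \<open>auto simp: phase_state_def\<close>)
qed

lemma phase_state_zeros: "c = 0 \<or> 2 * t + \<alpha> < c \<Longrightarrow> phase_state c (replicate n False)"
  unfolding phase_state_def by auto

lemma phase_state_complement:
  assumes "phase_state c v" "t + \<alpha> \<le> c" "c \<le> 2 * t + \<alpha>"
  shows "map Not v \<in> WB (c - t - \<alpha>)"
proof (cases "c = t + \<alpha>")
  case True
  then have "v = replicate n True" using assms(1) alpha_pos unfolding phase_state_def by simp
  then show ?thesis using True by simp
qed (use assms in \<open>auto simp: phase_state_def\<close>)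

lemma phase_state_Suc:
  assumes v: "phase_state c v" and c: "phase i = c" and m: "m \<in> msgs n (CR (Suc i))"
  shows "phase_state (phase (Suc i)) (CE (Suc i) m v)"
proof -
  note next_phase = phase_Suc[OF c] and encode = constr_E_Suc[OF c, of m v]
  have m_rate: "m \<in> msgs n (if c < t then R (Suc c)
      else if t + \<alpha> \<le> c \<and> c < 2 * t + \<alpha> then R (Suc c - t - \<alpha>) else 0)"
    using m unfolding constr_R_Suc[OF c] .
  consider "c < t" | "c = t" | "t < c \<and> c < t + \<alpha>" | "t + \<alpha> \<le> c \<and> c < 2 * t + \<alpha>"
    | "2 * t + \<alpha> \<le> c"
    by linarith
  then show ?thesis
  proof cases
    case 1
    have "v \<in> WB c" using 1 v by (simp add: phase_state_def)
    then have "E (Suc c) m v \<in> WB (Suc c)" using 1 m_rate by auto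
    then show ?thesis using 1 next_phase encode by (simp add: phase_state_def)
  next
    case 2
    then show ?thesis using alpha_pos next_phase encode by (simp add: phase_state_def)
  next
    case 3
    then show ?thesis using v next_phase encode by (simp add: phase_state_def)
  next
    case 4
    define j where "j = c - t - \<alpha>"
    have j: "Suc c - t - \<alpha> = Suc j" using 4 unfolding j_def by arith
    have "map Not v \<in> WB j" using 4 v phase_state_complement by (simp add: j_def)
    then have "E (Suc j) m (map Not v) \<in> WB (Suc j)" using 4 m_rate j by auto
    then show ?thesis using 4 j alpha_pos next_phase encode by (simp add: phase_state_def comp_def)
  next
    case 5
    then have "CE (Suc i) m v = replicate n False"
      using v alpha_pos encode by (auto simp: phase_state_def)
    moreover have "phase (Suc i) = 0 \<or> 2 * t + \<alpha> < phase (Suc i)"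
      using 5 alpha_pos next_phase by auto
    ultimately show ?thesis using phase_state_zeros by simp
  qed
qed

lemma valid_msgs_Suc: "valid_msgs n CR ms \<Longrightarrow> ms (Suc i) \<in> msgs n (CR (Suc i))"
  unfolding valid_msgs_def by simp

lemma code_state_phase:
  assumes "valid_msgs n CR ms" shows "phase_state (phase i) (state ms i)"
proof (induction i)
  case 0
  then show ?case using phase_state_zeros by simp
next
  case (Suc i)
  then show ?case using phase_state_Suc valid_msgs_Suc[OF assms] by simp
qed

lemma code_state_decode:
  assumes ms: "valid_msgs n CR ms"
  shows "CD (Suc i) (state ms (Suc i)) = ms (Suc i)"
proof -
  define c where "c = phase i"
  define v where "v = state ms i"
  have c: "phase i = c" by (simp add: c_def)
  have v: "phase_state c v" using code_state_phase[OF ms] by (simp add: c_def v_def)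
  have m: "ms (Suc i) \<in> msgs n (CR (Suc i))" using valid_msgs_Suc[OF ms] .
  note R = constr_R_Suc[OF c] and encode = constr_E_Suc[OF c] and decode = constr_D_Suc[OF c]
  consider "c < t" | "t + \<alpha> \<le> c \<and> c < 2 * t + \<alpha>"
    | "\<not> c < t" "\<not> (t + \<alpha> \<le> c \<and> c < 2 * t + \<alpha>)"
    by blast
  then show ?thesis
  proof cases
    case 1
    then show ?thesis using v m R wom_code_write[of "Suc c" "ms (Suc i)" v]
      by (simp add: v_def encode decode phase_state_def)
  next
    case 2
    define j where "j = c - t - \<alpha>"
    have "Suc c - t - \<alpha> = Suc j" "Suc j \<le> t" using 2 unfolding j_def by arith+
    moreover have "map Not v \<in> WB j" using 2 v phase_state_complement by (simp add: j_def)
    ultimately show ?thesis using 2 m R alpha_pos wom_code_write[of "Suc j" "ms (Suc i)" "map Not v"]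
      by (simp add: v_def encode decode comp_def)
  next
    case 3
    then have "CR (Suc i) = 0" using R by auto
    then have "ms (Suc i) = 1" using m msgs_0 by simp
    then show ?thesis using 3 decode by auto
  qed
qed

lemma construction_is_code: "is_code n CR CE CD"
  unfolding is_code_def
proof (intro conjI allI impI)
  fix i :: nat assume "1 \<le> i"
  then obtain i0 where i: "i = Suc i0" using not0_implies_Suc by fastforce
  define c where "c = phase i0"
  have c: "phase i0 = c" by (simp add: c_def)
  have R_nonneg: "0 \<le> R j" if "1 \<le> j" "j \<le> t" for j
    using wom that unfolding wom_code_def by simp
  have "t + \<alpha> \<le> c \<Longrightarrow> c < 2 * t + \<alpha> \<Longrightarrow> 0 \<le> R (Suc c - t - \<alpha>)"
    by (rule R_nonneg) linarith+
  then show "0 \<le> CR i" using R_nonneg[of "Suc c"] constr_R_Suc[OF c] by (simp add: i)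
next
  fix ms :: "nat \<Rightarrow> nat" and i :: nat assume ms: "valid_msgs n CR ms" and "1 \<le> i"
  then obtain i0 where i: "i = Suc i0" using not0_implies_Suc by fastforce
  show "length (state ms i) = n" using code_state_phase[OF ms] phase_state_length by blast
  show "CD i (state ms i) = ms i" using code_state_decode[OF ms] i by simp
qed

lemma code_state_idle:
  "phase i = c \<Longrightarrow> (t < c \<and> c < t + \<alpha>) \<or> 2 * t + \<alpha> < c \<Longrightarrow>
   state ms (Suc i) = state ms i"
  using constr_E_Suc by auto

lemma code_state_rising:
  assumes ms: "valid_msgs n CR ms" and c: "phase i = c" "c < t + \<alpha>" and p: "p < n"
    and before: "state ms i ! p"
  shows "state ms (Suc i) ! p"
proof -
  define v where "v = state ms i"
  have v: "phase_state c v" using code_state_phase[OF ms, of i] c by (simp add: v_def)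
  note encode = constr_E_Suc[OF c(1)]
  consider "c < t" | "c = t" | "t < c" by linarith
  then show ?thesis
  proof cases
    case 1
    have "list_all2 (\<le>) v (E (Suc c) (ms (Suc i)) v)"
      using 1 v valid_msgs_Suc[OF ms, of i] constr_R_Suc[OF c(1)]
        wom_code_write[of "Suc c" "ms (Suc i)" v]
      by (simp add: phase_state_def)
    moreover have "length v = n" using v phase_state_length by blast
    ultimately have "v ! p \<le> E (Suc c) (ms (Suc i)) v ! p"
      using p list_all2_nthD by blast
    then show ?thesis using 1 before by (simp add: v_def encode)
  next
    case 2
    then show ?thesis using p by (simp add: encode)
  next
    case 3
    then show ?thesis using c(2) before code_state_idle[OF c(1), of ms] by simp
  qed
qed

lemma code_state_falling:
  assumes ms: "valid_msgs n CR ms" and c: "phase i = c" "t + \<alpha> \<le> c" and p: "p < n"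
    and after: "state ms (Suc i) ! p"
  shows "state ms i ! p"
proof -
  define v where "v = state ms i"
  have v: "phase_state c v" using code_state_phase[OF ms, of i] c by (simp add: v_def)
  note encode = constr_E_Suc[OF c(1)]
  consider "c < 2 * t + \<alpha>" | "c = 2 * t + \<alpha>" | "2 * t + \<alpha> < c" by linarith
  then show ?thesis
  proof cases
    case 1
    define j where "j = c - t - \<alpha>"
    define w where "w = E (Suc j) (ms (Suc i)) (map Not v)"
    have j: "Suc c - t - \<alpha> = Suc j" "Suc j \<le> t" using c 1 unfolding j_def by arith+
    have "map Not v \<in> WB j" using c 1 v phase_state_complement by (simp add: j_def)
    then have "list_all2 (\<le>) (map Not v) w"
      using c 1 j valid_msgs_Suc[OF ms, of i] constr_R_Suc[OF c(1)]
        wom_code_write[of "Suc j" "ms (Suc i)" "map Not v"]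
      by (simp add: w_def)
    moreover have "length v = n" using v phase_state_length by blast
    ultimately have "(\<not> v ! p) \<le> w ! p" "length w = n"
      using p list_all2_nthD list_all2_lengthD by fastforce+
    moreover have "state ms (Suc i) = map Not w"
      using c 1 j alpha_pos by (simp add: v_def w_def encode)
    ultimately show ?thesis using p after by (simp add: v_def)
  next
    case 2
    then show ?thesis using alpha_pos c p after by (simp add: encode)
  next
    case 3
    then show ?thesis using after code_state_idle[OF c(1), of ms] by simp
  qed
qed

lemma code_state_change_persists:
  assumes ms: "valid_msgs n CR ms" and p: "p < n"
    and change: "state ms i ! p \<noteq> state ms (Suc i) ! p" and e: "e < \<alpha>"
  shows "state ms (Suc i + e) ! p = state ms (Suc i) ! p"
proof -
  define c where "c = phase i"
  have c: "phase i = c" by (simp add: c_def)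
  have phase_after: "phase (Suc i + k) = Suc c + k" if "c + Suc k < period" for k
    using mod_add_no_wrap[of i period "Suc k"] that by (simp add: c_def)
  have keeps: "state ms (Suc i + e) ! p = b"
    if start: "state ms (Suc i) ! p = b"
      and step: "\<And>k. Suc k < \<alpha> \<Longrightarrow> state ms (Suc i + k) ! p = b \<Longrightarrow>
        state ms (Suc (Suc i + k)) ! p = b" for b
  proof -
    have "0 \<le> e" by simp
    then show ?thesis using e
      by (induction e rule: dec_induct) (use start step in auto)
  qed
  have "c \<le> t \<or> (t + \<alpha> \<le> c \<and> c \<le> 2 * t + \<alpha>)"
    using change code_state_idle[OF c, of ms] by fastforce
  then show ?thesis
  proof
    assume rising: "c \<le> t"
    then have "state ms (Suc i) ! p"
      using change code_state_rising[OF ms c _ p] alpha_pos by fastforce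
    moreover have "state ms (Suc (Suc i + k)) ! p" if "Suc k < \<alpha>" "state ms (Suc i + k) ! p" for k
      using that rising phase_after[of k] code_state_rising[OF ms _ _ p, of "Suc i + k"] by simp
    ultimately show ?thesis using keeps[of True] by simp
  next
    assume falling: "t + \<alpha> \<le> c \<and> c \<le> 2 * t + \<alpha>"
    then have "\<not> state ms (Suc i) ! p"
      using change code_state_falling[OF ms c _ p] by fastforce
    moreover have "\<not> state ms (Suc (Suc i + k)) ! p"
      if "Suc k < \<alpha>" "\<not> state ms (Suc i + k) ! p" for k
      using that falling phase_after[of k] code_state_falling[OF ms _ _ p, of "Suc i + k"] by auto
    ultimately show ?thesis using keeps[of False] by simp
  qed
qed

lemma code_state_changes_apart:
  assumes ms: "valid_msgs n CR ms" and p: "p < n"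
    and change: "state ms i ! p \<noteq> state ms (Suc i) ! p"
    and change': "state ms (i + d) ! p \<noteq> state ms (Suc (i + d)) ! p" and d: "d < \<alpha>"
  shows "d = 0"
proof (rule ccontr)
  assume "d \<noteq> 0"
  then have "Suc i + (d - 1) = i + d" by simp
  then show False
    using code_state_change_persists[OF ms p change, of "d - 1"]
      code_state_change_persists[OF ms p change, of d] change' d by simp
qed

lemma construction_constrained: "constrained_code n CR CE CD \<alpha> 1 1"
  unfolding constrained_code_def
proof (intro conjI allI impI construction_is_code)
  fix ms :: "nat \<Rightarrow> nat" and i j :: nat
  assume ms: "valid_msgs n CR ms" and j: "1 \<le> j \<and> j + 1 \<le> n + 1"
  define S where "S = {(k, l). k < \<alpha> \<and> l < (1::nat) \<and>
    state ms (i + k) ! (j + l - 1) \<noteq> state ms (i + k + 1) ! (j + l - 1)}"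
  have p: "j - 1 < n" using j by linarith
  have same: "k = k'" if "k \<le> k'" "(k, 0) \<in> S" "(k', 0) \<in> S" for k k'
  proof -
    have "i + k + (k' - k) = i + k'" "k' - k < \<alpha>" using that by (auto simp: S_def)
    then show ?thesis using that code_state_changes_apart[OF ms p, of "i + k" "k' - k"]
      by (simp add: S_def del: code_state.simps)
  qed
  have pair: "x = (fst x, 0)" if "x \<in> S" for x
    using that by (cases x) (simp add: S_def)
  have singleton: "S \<subseteq> {a}" if "a \<in> S" for a
  proof
    fix b assume "b \<in> S"
    then show "b \<in> {a}"
      using that pair[of a] pair[of b] same[of "fst a" "fst b"] same[of "fst b" "fst a"]
      by (cases "fst a \<le> fst b") auto
  qed
  have "card S \<le> 1"
  proof (cases "S = {}")
    case False
    then obtain a where "a \<in> S" by blast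
    then have "card S \<le> card {a}" using singleton by (intro card_mono) auto
    then show ?thesis by simp
  qed simp
  then show "card {(k, l). k < \<alpha> \<and> l < 1 \<and>
      state ms (i + k) ! (j + l - 1) \<noteq> state ms (i + k + 1) ! (j + l - 1)} \<le> 1"
    by (simp only: S_def)
qed

lemma constr_R_periodic: "CR (i + period) = CR i"
  unfolding constr_R_def cidx_def by simp

lemma sum_constr_R_period: "(\<Sum>i=1..period. CR i) = 2 * sum_rate t R"
proof -
  define h where "h = t + \<alpha>"
  define f where "f j = (if j \<le> t then R j else 0)" for j
  have halves: "CR (Suc j) = f (Suc j)" "CR (Suc j + h) = f (Suc j)" if "j < h" for j
    using that alpha_pos constr_R_Suc[of j j] constr_R_Suc[of "j + h" "j + h"]
    by (simp_all add: h_def f_def)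
  have first_half: "CR i = f i" and second_half: "CR (i + h) = f i" if i: "i \<in> {1..h}" for i
  proof -
    obtain j where "i = Suc j" "j < h" using i by (cases i) auto
    then show "CR i = f i" "CR (i + h) = f i" using halves by simp_all
  qed
  have "(\<Sum>i=1..period. CR i) = (\<Sum>i=1..h + h. CR i)"
    by (simp only: h_def mult_2)
  also have "\<dots> = (\<Sum>i=1..h. CR i) + (\<Sum>i=h + 1..h + h. CR i)"
    by (rule sum.ub_add_nat) simp
  also have "(\<Sum>i=h + 1..h + h. CR i) = (\<Sum>i=1..h. CR (i + h))"
    by (simp only: add.commute[of h 1] sum.shift_bounds_cl_nat_ivl)
  also have "(\<Sum>i=1..h. CR (i + h)) = (\<Sum>i=1..h. f i)"
    by (rule sum.cong) (simp_all add: second_half)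
  also have "(\<Sum>i=1..h. CR i) = (\<Sum>i=1..h. f i)"
    by (rule sum.cong) (simp_all add: first_half)
  also have "(\<Sum>i=1..h. f i) = sum_rate t R"
    using sum.ub_add_nat[of 1 t f \<alpha>] by (simp add: h_def f_def sum_rate_def)
  finally show ?thesis by simp
qed

lemma construction_rate: "code_rate CR (sum_rate t R / real (t + \<alpha>))"
proof -
  have "(\<lambda>m. (\<Sum>i=1..m. CR i) / real m) \<longlonglongrightarrow> (\<Sum>i=1..period. CR i) / real period"
    using alpha_pos constr_R_periodic by (intro periodic_average_tendsto) simp_all
  moreover have "(\<Sum>i=1..period. CR i) / real period = sum_rate t R / real (t + \<alpha>)"
    using sum_constr_R_period alpha_pos by (simp add: divide_simps)
  ultimately show ?thesis unfolding code_rate_def by simp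
qed

end

theorem theorem6:
  fixes \<alpha> t n :: nat
    and R :: "nat \<Rightarrow> real"
    and E :: "nat \<Rightarrow> nat \<Rightarrow> bool list \<Rightarrow> bool list"
    and D :: "nat \<Rightarrow> bool list \<Rightarrow> nat"
  assumes "0 < \<alpha>" and "0 < t" and "0 < n"
    and "wom_code n t R E D"
  shows "constrained_code n (constr_R t \<alpha> R) (constr_E n t \<alpha> E) (constr_D t \<alpha> D) \<alpha> 1 1
       \<and> (sum_rate t R = log 2 (real t + 1) \<longrightarrow>
            code_rate (constr_R t \<alpha> R) (log 2 (real t + 1) / real (t + \<alpha>)))"
proof -
  interpret cyclic_construction \<alpha> t n R E D
    using assms by unfold_locales
  show ?thesis using construction_constrained construction_rate by auto
qed

end
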